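(* Let $p\in(0,1/2)$ and $\beta<0$. Then there exists $r_0=r_0(p,\beta)>0$ and a convex function $u$ with the following properties: - $u\in C^\infty(\Sigma_{\beta,r_0})$, $u$ is continuous up to $\varsigma_{\beta,r_0}$, and $u>0$ in $\Sigma_{\beta,r_0}$; - $u$ solves $\det D^2u=u^p$ in $\Sigma_{\beta,r_0}$; - $u=0$ on $\varsigma_{\beta,r_0}$.
   Context: For $\beta<0$ and $r_0>0$, define the "wiping domain" and its boundary curve by $$\Sigma_{\beta,r_0}=\{(x,y)\in\mathbb{R}^2:\ y>0,\ e^xy^\beta>r_0\},\qquad \varsigma_{\beta,r_0}=\{(x,y)\in\mathbb{R}^2:\ y>0,\ e^xy^\beta=r_0\}.$$ *)

theory Defs
  imports "HOL-Analysis.Analysis"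
begin

definition wiping_domain :: "real \<Rightarrow> real \<Rightarrow> (real \<times> real) set" where
  "wiping_domain \<beta> r0 = {(x, y). y > 0 \<and> exp x * y powr \<beta> > r0}"

definition wiping_curve :: "real \<Rightarrow> real \<Rightarrow> (real \<times> real) set" where
  "wiping_curve \<beta> r0 = {(x, y). y > 0 \<and> exp x * y powr \<beta> = r0}"

fun Ck_on :: "nat \<Rightarrow> (real \<times> real) set \<Rightarrow> (real \<times> real \<Rightarrow> real) \<Rightarrow> bool" where
  "Ck_on 0 S f = continuous_on S f"
| "Ck_on (Suc k) S f = (\<exists>fx fy.
      (\<forall>z\<in>S. (f has_derivative (\<lambda>h. fx z * fst h + fy z * snd h)) (at z))
      \<and> Ck_on k S fx \<and> Ck_on k S fy)"

definition C_infinity_on :: "(real \<times> real) set \<Rightarrow> (real \<times> real \<Rightarrow> real) \<Rightarrow> bool" where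
  "C_infinity_on S f = (\<forall>k. Ck_on k S f)"

definition pd1 :: "(real \<times> real \<Rightarrow> real) \<Rightarrow> real \<times> real \<Rightarrow> real" where
  "pd1 f z = deriv (\<lambda>t. f (t, snd z)) (fst z)"

definition pd2 :: "(real \<times> real \<Rightarrow> real) \<Rightarrow> real \<times> real \<Rightarrow> real" where
  "pd2 f z = deriv (\<lambda>t. f (fst z, t)) (snd z)"

definition det_hessian :: "(real \<times> real \<Rightarrow> real) \<Rightarrow> real \<times> real \<Rightarrow> real" where
  "det_hessian f z = pd1 (pd1 f) z * pd2 (pd2 f) z - pd2 (pd1 f) z * pd1 (pd2 f) z"

end

theory Submission
  imports Defs
begin

text \<open>The solution is sought in the self-similar form u(x,y) = y^a G(t), t = x + \<beta> ln y, with
  a = 2/(2 - p): then det D^2 u and u^p carry the same power y^(2a - 2) = y^(a p), and the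
  Monge-Ampere equation reduces to the profile equation G'' = (a^2 G'^2 + G^p) / (a(a-1) G - \<beta> G').
  If G(0) = 0, then u vanishes on the curve e^x y^\<beta> = 1. Writing G' = P(G) turns the profile
  equation into a first-order equation for P whose right-hand side is bounded and Lipschitz for
  P \<ge> 1; a Picard iteration in an exponentially weighted sup norm solves it on all of [0, \<infinity>)
  with P(0) = 1, and G is the inverse of the map sending g to the integral of 1/P over [0, g].
  Convexity holds because u_xx > 0 and det D^2 u \<ge> 0, and smoothness because all derivatives of
  functions y^e h(x + \<beta> ln y) are again of this form.\<close>

lemma exp_neg_mult_le_inverse:
  fixes L x :: real
  assumes "L > 0" "x \<ge> 0"
  shows "exp (- L * x) * x \<le> 1 / L"
proof -
  have "L * x \<le> exp (L * x)"
    using exp_ge_add_one_self[of "L * x"] by linarith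
  then have "x \<le> exp (L * x) / L" using assms by (simp add: field_simps)
  then have "exp (- L * x) * x \<le> exp (- L * x) * (exp (L * x) / L)"
    by (intro mult_left_mono) auto
  also have "\<dots> = 1 / L" by (simp add: exp_minus field_simps)
  finally show ?thesis .
qed

lemma integral_abs_le_const:
  fixes f :: "real \<Rightarrow> real"
  assumes "continuous_on {0..x} f" and "\<And>h. h \<in> {0..x} \<Longrightarrow> \<bar>f h\<bar> \<le> B" and "x \<ge> 0"
  shows "\<bar>integral {0..x} f\<bar> \<le> B * x"
proof -
  have "norm (integral {0..x} f) \<le> integral {0..x} (\<lambda>_. B)"
    using assms by (intro integral_norm_bound_integral integrable_continuous_real) auto
  then show ?thesis using assms(3) by (simp add: mult.commute)
qed

lemma continuous_on_integral_upto_max0: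
  fixes f :: "real \<Rightarrow> real"
  assumes "continuous_on UNIV f"
  shows "continuous_on UNIV (\<lambda>g. integral {0..max g 0} f)"
proof -
  have "isCont (\<lambda>g. integral {0..max g 0} f) x" for x
  proof -
    define B where "B = \<bar>x\<bar> + 1"
    have "continuous_on {0..B} (\<lambda>y. integral {0..y} f)"
      by (intro indefinite_integral_continuous_1 integrable_continuous_real
          continuous_on_subset[OF assms]) auto
    then have "continuous_on {..<B} (\<lambda>g. integral {0..max g 0} f)"
      by (rule continuous_on_compose2) (auto intro!: continuous_intros simp: B_def)
    moreover have "x \<in> {..<B}" unfolding B_def by auto
    ultimately show ?thesis using continuous_on_eq_continuous_at[of "{..<B}"] by auto
  qed
  then show ?thesis by (simp add: continuous_at_imp_continuous_on)
qed

lemma has_integral_exp_mult: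
  fixes c L x :: real
  assumes "L > 0" "x \<ge> 0"
  shows "((\<lambda>h. c * exp (L * h)) has_integral (c * exp (L * x) / L - c / L)) {0..x}"
proof -
  have "((\<lambda>h. c * exp (L * h) / L) has_vector_derivative c * exp (L * h))
      (at h within {0..x})" for h
  proof -
    have "((\<lambda>h. c * exp (L * h) / L) has_real_derivative c * (exp (L * h) * (L * 1)) / L)
        (at h within {0..x})"
      using assms by (intro derivative_eq_intros) auto
    then show ?thesis
      using assms by (simp add: has_real_derivative_iff_has_vector_derivative[symmetric])
  qed
  then show ?thesis
    using fundamental_theorem_of_calculus[OF assms(2), of "\<lambda>h. c * exp (L * h) / L"] by simp
qed

lemma abs_divide_diff_divide:
  fixes E x y :: real
  assumes "x > 0" "y > 0"
  shows "\<bar>E / x - E / y\<bar> = \<bar>E\<bar> * \<bar>x - y\<bar> / (x * y)"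
proof -
  have "E / x - E / y = E * (y - x) / (x * y)" using assms by (simp add: field_simps)
  then show ?thesis using assms by (simp add: abs_mult abs_divide abs_minus_commute)
qed

section \<open>Inverting an increasing unbounded function\<close>

lemma strict_mono_on_image_Icc:
  fixes T :: "real \<Rightarrow> real"
  assumes cont: "continuous_on {0..B} T" and mono: "strict_mono_on {0..} T" and "B \<ge> 0"
  shows "T ` {0..B} = {T 0..T B}"
proof
  show "T ` {0..B} \<subseteq> {T 0..T B}"
    using strict_mono_on_leD[OF mono] assms(3) by auto
  show "{T 0..T B} \<subseteq> T ` {0..B}"
    using IVT'[of T 0 _ B] assms(3) cont by fastforce
qed

lemma strict_mono_on_inverse_continuous:
  fixes T :: "real \<Rightarrow> real"
  assumes cont: "\<And>B. continuous_on {0..B} T" and mono: "strict_mono_on {0..} T" and T0: "T 0 = 0"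
    and unbounded: "\<And>t. t \<ge> 0 \<Longrightarrow> \<exists>B\<ge>0. t \<le> T B"
  shows "T ` {0..} = {0..}" and "continuous_on {0..} (the_inv_into {0..} T)"
proof -
  have inj: "inj_on T {0..}" by (rule strict_mono_on_imp_inj_on[OF mono])
  note image_Icc = strict_mono_on_image_Icc[OF cont mono, unfolded T0]
  show "T ` {0..} = {0..}"
  proof
    show "T ` {0..} \<subseteq> {0..}" using strict_mono_on_leD[OF mono, of 0] T0 by auto
    show "{0..} \<subseteq> T ` {0..}"
    proof
      fix t :: real assume "t \<in> {0..}"
      then obtain B where "B \<ge> 0" "t \<in> {0..T B}" using unbounded by fastforce
      then show "t \<in> T ` {0..}" using image_Icc by fastforce
    qed
  qed
  show "continuous_on {0..} (the_inv_into {0..} T)"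
    unfolding continuous_on_eq_continuous_within
  proof
    fix t :: real assume "t \<in> {0..}"
    then obtain B where B: "B \<ge> 0" "t + 1 \<le> T B" using unbounded[of "t + 1"] by auto
    have "continuous_on (T ` {0..B}) (the_inv_into {0..B} T)"
      by (intro continuous_on_inv_into cont inj_on_subset[OF inj]) auto
    moreover have "the_inv_into {0..B} T s = the_inv_into {0..} T s" if "s \<in> T ` {0..B}" for s
      using that inj inj_on_subset[OF inj, of "{0..B}"] by (auto simp: the_inv_into_f_f)
    ultimately have "continuous_on {0..T B} (the_inv_into {0..} T)"
      using continuous_on_cong[OF refl] image_Icc[OF B(1)] by metis
    then have "continuous (at t within {0..T B}) (the_inv_into {0..} T)"
      using \<open>t \<in> {0..}\<close> B by (simp add: continuous_on_eq_continuous_within)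
    moreover have "at t within {0..} = at t within {0..T B}"
      using B by (intro at_within_nhd[of t "{..<T B}"]) auto
    ultimately show "continuous (at t within {0..}) (the_inv_into {0..} T)" by simp
  qed
qed

lemma psd2_quadratic_form_nonneg:
  fixes A B C v1 v2 :: real
  assumes "A > 0" "A * C - B * B \<ge> 0"
  shows "0 \<le> (A * v1 + B * v2) * v1 + (B * v1 + C * v2) * v2"
proof -
  have "A * ((A * v1 + B * v2) * v1 + (B * v1 + C * v2) * v2)
      = (A * v1 + B * v2)\<^sup>2 + (A * C - B * B) * v2\<^sup>2"
    unfolding power2_eq_square by algebra
  also have "\<dots> \<ge> 0" using assms by (intro add_nonneg_nonneg) auto
  finally show ?thesis using assms(1) by (simp add: zero_le_mult_iff)
qed

lemma convex_on_if_convex_on_segments: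
  fixes f :: "'a::real_vector \<Rightarrow> real"
  assumes "convex S"
    and "\<And>x y. x \<in> S \<Longrightarrow> y \<in> S \<Longrightarrow> convex_on {0..1} (\<lambda>s. f (x + s *\<^sub>R (y - x)))"
  shows "convex_on S f"
proof (rule convex_onI[OF _ assms(1)])
  fix t :: real and x y assume t: "0 < t" "t < 1" and xy: "x \<in> S" "y \<in> S"
  have "f (x + t *\<^sub>R (y - x)) \<le> (1 - t) * f (x + 0 *\<^sub>R (y - x)) + t * f (x + 1 *\<^sub>R (y - x))"
    using convex_onD[OF assms(2)[OF xy], of t 0 1] t by simp
  moreover have "x + t *\<^sub>R (y - x) = (1 - t) *\<^sub>R x + t *\<^sub>R y" by (simp add: algebra_simps)
  ultimately show "f ((1 - t) *\<^sub>R x + t *\<^sub>R y) \<le> (1 - t) * f x + t * f y" by simp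
qed

lemma exp_mult_powr_eq_exp_add:
  fixes x y \<beta> :: real
  assumes "y > 0"
  shows "exp x * y powr \<beta> = exp (x + \<beta> * ln y)"
  using assms by (simp add: powr_def exp_add)

lemma partial_derivatives_eqI:
  fixes f g :: "real \<times> real \<Rightarrow> real"
  assumes g: "(g has_derivative (\<lambda>k. A * fst k + B * snd k)) (at z)"
    and S: "open S" "z \<in> S" and eq: "\<And>w. w \<in> S \<Longrightarrow> f w = g w"
  shows "pd1 f z = A" and "pd2 f z = B"
proof -
  obtain x y where z: "z = (x, y)" by (cases z)
  from has_derivative_compose[OF has_derivative_Pair[OF has_derivative_ident has_derivative_const]
      g[unfolded z]]
  have "((\<lambda>s. g (s, y)) has_real_derivative A) (at x)"
    unfolding has_field_derivative_def by (rule has_derivative_eq_rhs) auto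
  moreover from has_derivative_compose[OF
      has_derivative_Pair[OF has_derivative_const has_derivative_ident] g[unfolded z]]
  have "((\<lambda>s. g (x, s)) has_real_derivative B) (at y)"
    unfolding has_field_derivative_def by (rule has_derivative_eq_rhs) auto
  moreover have "open ((\<lambda>s. (s, y)) -` S)" "open ((\<lambda>s. (x, s)) -` S)"
    using S(1)
    by (simp_all add: open_vimage continuous_on_Pair continuous_on_id continuous_on_const)
  ultimately have "((\<lambda>s. f (s, y)) has_real_derivative A) (at x)"
    "((\<lambda>s. f (x, s)) has_real_derivative B) (at y)"
    using S(2) eq unfolding z
    by (auto intro: has_field_derivative_transform_within_open)
  then show "pd1 f z = A" "pd2 f z = B"
    unfolding pd1_def pd2_def z by (auto intro: DERIV_imp_deriv)
qed

lemma has_real_derivative_along_line: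
  fixes f :: "real \<times> real \<Rightarrow> real"
  assumes "(f has_derivative (\<lambda>k. A * fst k + B * snd k)) (at (x + s *\<^sub>R v))"
  shows "((\<lambda>s. f (x + s *\<^sub>R v)) has_real_derivative A * fst v + B * snd v) (at s)"
proof -
  have "((\<lambda>s. x + s *\<^sub>R v) has_derivative (\<lambda>k. 0 + k *\<^sub>R v)) (at s)"
    by (rule has_derivative_add[OF has_derivative_const
          has_derivative_scaleR_left[OF has_derivative_ident]])
  from has_derivative_compose[OF this assms]
  have "((\<lambda>s. f (x + s *\<^sub>R v)) has_derivative
      (\<lambda>k. A * fst (0 + k *\<^sub>R v) + B * snd (0 + k *\<^sub>R v))) (at s)" .
  then show ?thesis
    unfolding has_field_derivative_def by (rule has_derivative_eq_rhs) (auto simp: algebra_simps)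
qed

section \<open>The slope equation\<close>

text \<open>If the profile G is increasing, its speed Q = G' can be written as Q = P(G). The profile
  equation then becomes dP/dg = slope_rhs g P, where b = -\<beta>. Clamping g \<ge> 0 and P \<ge> 1 makes the
  right-hand side bounded and globally Lipschitz in P; the solution has P \<ge> 1, so the clamp is
  never active.\<close>

locale slope_ode =
  fixes a b p :: real
  assumes a_gt1: "a > 1" and b_pos: "b > 0" and p_pos: "0 < p" and p_le1: "p \<le> 1"
begin

definition \<alpha> :: real where "\<alpha> = a * (a - 1)"

definition slope_rhs :: "real \<Rightarrow> real \<Rightarrow> real" where
  "slope_rhs g P = (a\<^sup>2 * P\<^sup>2 + g powr p) / (P * (\<alpha> * g + b * P))"

definition slope_rhs_clamped :: "real \<Rightarrow> real \<Rightarrow> real" where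
  "slope_rhs_clamped g P = slope_rhs (max g 0) (max P 1)"

definition source_bound :: real where "source_bound = 1 / b + 1 / \<alpha>"
definition rhs_bound :: real where "rhs_bound = a\<^sup>2 / b + source_bound"
definition rhs_lipschitz :: real where "rhs_lipschitz = a\<^sup>2 / b + 2 * source_bound"

lemma \<alpha>_pos: "\<alpha> > 0"
  unfolding \<alpha>_def using a_gt1 by simp

lemma source_bound_pos: "source_bound > 0"
  unfolding source_bound_def using \<alpha>_pos b_pos by (simp add: add_pos_pos)

lemma rhs_bound_pos: "rhs_bound > 0"
  unfolding rhs_bound_def using source_bound_pos b_pos by (intro add_nonneg_pos) auto

lemma rhs_lipschitz_pos: "rhs_lipschitz > 0"
  unfolding rhs_lipschitz_def using source_bound_pos b_pos by (intro add_nonneg_pos) auto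

lemma denominator_ge:
  assumes "g \<ge> 0" "P \<ge> 1"
  shows "\<alpha> * g + b * P \<ge> \<alpha> * g + b" "\<alpha> * g + b * P \<ge> b * P" "\<alpha> * g + b \<ge> b"
  using assms \<alpha>_pos b_pos by (auto intro: mult_nonneg_nonneg)

lemma powr_div_affine_le:
  assumes g: "g \<ge> 0"
  shows "g powr p / (\<alpha> * g + b) \<le> source_bound"
proof (cases "g \<le> 1")
  case True
  have "g powr p \<le> 1" using powr_le1[of p g] True g p_pos by simp
  then have "g powr p / (\<alpha> * g + b) \<le> 1 / b"
    using denominator_ge(3)[OF g order.refl] b_pos by (intro frac_le) auto
  then show ?thesis unfolding source_bound_def using \<alpha>_pos by (simp add: add_increasing2)
next
  case False
  have "g powr p \<le> g" using powr_mono[of p 1 g] False p_le1 by simp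
  moreover have "g / (\<alpha> * g + b) \<le> 1 / \<alpha>"
    using \<alpha>_pos b_pos g by (simp add: divide_simps add_nonneg_pos)
  moreover have "\<alpha> * g + b > 0" using denominator_ge(3)[OF g order.refl] b_pos by linarith
  ultimately have "g powr p / (\<alpha> * g + b) \<le> 1 / \<alpha>"
    by (meson divide_right_mono less_imp_le order_trans)
  then show ?thesis unfolding source_bound_def using b_pos by (simp add: add_increasing)
qed

lemma slope_rhs_split:
  assumes g: "g \<ge> 0" and P: "P \<ge> 1"
  shows "slope_rhs g P = a\<^sup>2 * P / (\<alpha> * g + b * P) + g powr p / (P * (\<alpha> * g + b * P))"
proof -
  have "\<alpha> * g + b * P > 0" using denominator_ge(2)[OF assms] b_pos P by (smt (verit) mult_pos_pos)
  then show ?thesis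
    using P unfolding slope_rhs_def by (simp add: add_divide_distrib power2_eq_square)
qed

lemma slope_rhs_bounds:
  assumes g: "g \<ge> 0" and P: "P \<ge> 1"
  shows "0 \<le> slope_rhs g P" "slope_rhs g P \<le> rhs_bound"
proof -
  define D where "D = \<alpha> * g + b * P"
  have D_ge: "D \<ge> \<alpha> * g + b" "D \<ge> b * P" "\<alpha> * g + b \<ge> b"
    unfolding D_def using denominator_ge[OF assms] by auto
  then have D_pos: "D > 0" using b_pos by linarith
  have "a\<^sup>2 * P / D \<le> a\<^sup>2 * P / (b * P)"
    using D_ge b_pos P by (intro divide_left_mono) auto
  then have first: "a\<^sup>2 * P / D \<le> a\<^sup>2 / b" using P by simp
  have "\<alpha> * g + b \<le> P * D"
    using D_ge(1) mult_right_mono[OF P, of D] D_pos by linarith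
  then have "g powr p / (P * D) \<le> g powr p / (\<alpha> * g + b)"
    using D_ge(3) b_pos by (intro divide_left_mono) auto
  then have second: "g powr p / (P * D) \<le> source_bound"
    using powr_div_affine_le[OF g] by linarith
  have "0 \<le> a\<^sup>2 * P / D + g powr p / (P * D)" using D_pos P by simp
  then show "0 \<le> slope_rhs g P" "slope_rhs g P \<le> rhs_bound"
    using slope_rhs_split[OF assms] first second unfolding D_def rhs_bound_def by simp_all
qed

lemma slope_rhs_first_term_lipschitz:
  assumes g: "g \<ge> 0" and P1: "P1 \<ge> 1" and P2: "P2 \<ge> 1"
  shows "\<bar>a\<^sup>2 * P1 / (\<alpha> * g + b * P1) - a\<^sup>2 * P2 / (\<alpha> * g + b * P2)\<bar> \<le> a\<^sup>2 / b * \<bar>P1 - P2\<bar>"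
proof -
  define D1 where "D1 = \<alpha> * g + b * P1"
  define D2 where "D2 = \<alpha> * g + b * P2"
  have D1_ge: "D1 \<ge> \<alpha> * g" and D2_ge: "D2 \<ge> b"
    unfolding D1_def D2_def using denominator_ge[OF g P1] denominator_ge[OF g P2] b_pos
    by linarith+
  have D1_pos: "D1 > 0" "D2 > 0"
    using denominator_ge[OF g P1] b_pos D2_ge unfolding D1_def by linarith+
  have "a\<^sup>2 * P1 / D1 - a\<^sup>2 * P2 / D2 = a\<^sup>2 * (\<alpha> * g) * (P1 - P2) / (D1 * D2)"
    using D1_pos unfolding D1_def D2_def by (simp add: field_simps)
  then have "\<bar>a\<^sup>2 * P1 / D1 - a\<^sup>2 * P2 / D2\<bar> = (a\<^sup>2 * \<bar>P1 - P2\<bar>) * (\<alpha> * g / (D1 * D2))"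
    using D1_pos \<alpha>_pos g by (simp add: abs_mult abs_divide)
  also have "\<dots> \<le> (a\<^sup>2 * \<bar>P1 - P2\<bar>) * (1 / b)"
  proof -
    have "\<alpha> * g * b \<le> D1 * D2"
      using D1_ge D2_ge D1_pos \<alpha>_pos g b_pos by (intro mult_mono) auto
    then have "\<alpha> * g / (D1 * D2) \<le> 1 / b"
      using D1_pos b_pos by (simp add: divide_simps mult.commute)
    then show ?thesis by (intro mult_left_mono) auto
  qed
  finally show ?thesis unfolding D1_def D2_def by simp
qed

lemma slope_rhs_second_term_lipschitz:
  assumes g: "g \<ge> 0" and P1: "P1 \<ge> 1" and P2: "P2 \<ge> 1"
  shows "\<bar>g powr p / (P1 * (\<alpha> * g + b * P1)) - g powr p / (P2 * (\<alpha> * g + b * P2))\<bar>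
    \<le> 2 * source_bound * \<bar>P1 - P2\<bar>"
proof -
  define D1 where "D1 = \<alpha> * g + b * P1"
  define D2 where "D2 = \<alpha> * g + b * P2"
  define m where "m = \<alpha> * g + b"
  have m_le: "m \<le> D1" "m \<le> D2" and m_pos: "m > 0"
    unfolding D1_def D2_def m_def using denominator_ge[OF g P1] denominator_ge[OF g P2] b_pos
    by auto
  have D_pos: "D1 > 0" "D2 > 0" using m_le m_pos by auto
  have "P1 * D1 - P2 * D2 = (P1 - P2) * (\<alpha> * g + b * (P1 + P2))"
    unfolding D1_def D2_def by (simp add: algebra_simps)
  moreover have "0 \<le> \<alpha> * g + b * (P1 + P2)" "\<alpha> * g + b * (P1 + P2) \<le> D1 + D2"
    unfolding D1_def D2_def using \<alpha>_pos g b_pos P1 P2 by (auto simp: algebra_simps)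
  ultimately have num: "\<bar>P1 * D1 - P2 * D2\<bar> \<le> \<bar>P1 - P2\<bar> * (D1 + D2)"
    by (simp add: abs_mult mult_left_mono)
  have "1 * (D1 * D2) \<le> P1 * P2 * (D1 * D2)"
    using mult_mono[OF P1 P2] P1 D_pos by (intro mult_right_mono) auto
  then have "(D1 + D2) / (P1 * D1 * (P2 * D2)) \<le> (D1 + D2) / (D1 * D2)"
    using D_pos by (intro divide_left_mono) (auto simp: mult_ac)
  also have "\<dots> = 1 / D1 + 1 / D2" using D_pos by (simp add: field_simps)
  also have "\<dots> \<le> 2 / m" using m_le m_pos frac_le[of 1 1 m D1] frac_le[of 1 1 m D2] by simp
  finally have quot: "(D1 + D2) / (P1 * D1 * (P2 * D2)) \<le> 2 / m" .
  have "\<bar>g powr p / (P1 * D1) - g powr p / (P2 * D2)\<bar>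
      = g powr p * \<bar>P1 * D1 - P2 * D2\<bar> / (P1 * D1 * (P2 * D2))"
    using D_pos P1 P2 by (simp add: abs_divide_diff_divide)
  also have "\<dots> \<le> g powr p * (\<bar>P1 - P2\<bar> * (D1 + D2)) / (P1 * D1 * (P2 * D2))"
    using num D_pos P1 P2 by (intro divide_right_mono mult_left_mono) auto
  also have "\<dots> = g powr p * \<bar>P1 - P2\<bar> * ((D1 + D2) / (P1 * D1 * (P2 * D2)))" by simp
  also have "\<dots> \<le> g powr p * \<bar>P1 - P2\<bar> * (2 / m)"
    using quot by (intro mult_left_mono) auto
  also have "\<dots> = 2 * (g powr p / m) * \<bar>P1 - P2\<bar>" by simp
  also have "\<dots> \<le> 2 * source_bound * \<bar>P1 - P2\<bar>"
    using powr_div_affine_le[OF g] unfolding m_def by (intro mult_right_mono) auto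
  finally show ?thesis unfolding D1_def D2_def .
qed

lemma slope_rhs_lipschitz:
  assumes "g \<ge> 0" "P1 \<ge> 1" "P2 \<ge> 1"
  shows "\<bar>slope_rhs g P1 - slope_rhs g P2\<bar> \<le> rhs_lipschitz * \<bar>P1 - P2\<bar>"
  using slope_rhs_split[OF assms(1,2)] slope_rhs_split[OF assms(1,3)]
    slope_rhs_first_term_lipschitz[OF assms] slope_rhs_second_term_lipschitz[OF assms]
  unfolding rhs_lipschitz_def by (simp add: algebra_simps)

lemma slope_rhs_clamped_bounds: "0 \<le> slope_rhs_clamped g P" "slope_rhs_clamped g P \<le> rhs_bound"
  unfolding slope_rhs_clamped_def by (auto intro: slope_rhs_bounds)

lemma slope_rhs_clamped_lipschitz:
  "\<bar>slope_rhs_clamped g P1 - slope_rhs_clamped g P2\<bar> \<le> rhs_lipschitz * \<bar>P1 - P2\<bar>"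
proof -
  have "\<bar>slope_rhs_clamped g P1 - slope_rhs_clamped g P2\<bar> \<le> rhs_lipschitz * \<bar>max P1 1 - max P2 1\<bar>"
    unfolding slope_rhs_clamped_def by (rule slope_rhs_lipschitz) auto
  also have "\<dots> \<le> rhs_lipschitz * \<bar>P1 - P2\<bar>"
    using rhs_lipschitz_pos by (intro mult_left_mono) auto
  finally show ?thesis .
qed

lemma continuous_on_slope_rhs_clamped:
  assumes "continuous_on S k"
  shows "continuous_on S (\<lambda>h. slope_rhs_clamped h (k h))"
proof -
  have "max (k h) 1 * (\<alpha> * max h 0 + b * max (k h) 1) \<noteq> 0" for h
    using denominator_ge(2)[of "max h 0" "max (k h) 1"] b_pos
    by (smt (verit) max.cobounded2 mult_pos_pos)
  then show ?thesis
    unfolding slope_rhs_clamped_def slope_rhs_def using p_pos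
    by (intro continuous_intros continuous_on_powr' assms) auto
qed

text \<open>Bielecki's trick: for the weight exp (- picard_rate * g) the Picard operator is a
  1/2-contraction in the sup norm, so its fixed point gives a solution on all of [0, \<infinity>).\<close>

definition picard_rate :: real where "picard_rate = 2 * rhs_lipschitz"

lemma picard_rate_pos: "picard_rate > 0"
  unfolding picard_rate_def using rhs_lipschitz_pos by simp

definition picard_integrand :: "(real \<Rightarrow>\<^sub>C real) \<Rightarrow> real \<Rightarrow> real" where
  "picard_integrand w h = slope_rhs_clamped h (exp (picard_rate * h) * w h)"

definition picard :: "(real \<Rightarrow>\<^sub>C real) \<Rightarrow> real \<Rightarrow> real" where
  "picard w g = exp (- picard_rate * max g 0) * (1 + integral {0..max g 0} (picard_integrand w))"

lemma continuous_on_picard_integrand: "continuous_on S (picard_integrand w)"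
  unfolding picard_integrand_def[abs_def]
  by (intro continuous_on_slope_rhs_clamped continuous_intros) auto

lemma picard_in_bcontfun: "picard w \<in> bcontfun"
proof (rule bcontfun_normI)
  show "continuous_on UNIV (picard w)"
    unfolding picard_def[abs_def]
    by (intro continuous_intros continuous_on_integral_upto_max0 continuous_on_picard_integrand)
  fix g :: real
  define x where "x = max g 0"
  have x: "x \<ge> 0" unfolding x_def by simp
  have "\<bar>integral {0..x} (picard_integrand w)\<bar> \<le> rhs_bound * x"
    using slope_rhs_clamped_bounds x
    by (intro integral_abs_le_const continuous_on_picard_integrand)
       (auto simp: abs_le_iff picard_integrand_def)
  then have "\<bar>picard w g\<bar> \<le> exp (- picard_rate * x) * (1 + rhs_bound * x)"
    unfolding picard_def x_def[symmetric] by (auto simp: abs_mult intro!: mult_left_mono)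
  also have "\<dots> = exp (- picard_rate * x) + rhs_bound * (exp (- picard_rate * x) * x)"
    by (simp add: algebra_simps)
  also have "\<dots> \<le> 1 + rhs_bound * (1 / picard_rate)"
    using exp_neg_mult_le_inverse[OF picard_rate_pos x] rhs_bound_pos picard_rate_pos x
    by (intro add_mono mult_left_mono) auto
  finally show "norm (picard w g) \<le> 1 + rhs_bound * (1 / picard_rate)" by simp
qed

definition picard_op :: "(real \<Rightarrow>\<^sub>C real) \<Rightarrow> (real \<Rightarrow>\<^sub>C real)" where
  "picard_op w = Bcontfun (picard w)"

lemma picard_op_apply: "apply_bcontfun (picard_op w) = picard w"
  unfolding picard_op_def using Bcontfun_inverse[OF picard_in_bcontfun] by simp

lemma picard_integrand_lipschitz:
  "\<bar>picard_integrand w1 h - picard_integrand w2 h\<bar>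
    \<le> rhs_lipschitz * dist w1 w2 * exp (picard_rate * h)"
proof -
  have "\<bar>picard_integrand w1 h - picard_integrand w2 h\<bar>
      \<le> rhs_lipschitz * \<bar>exp (picard_rate * h) * w1 h - exp (picard_rate * h) * w2 h\<bar>"
    unfolding picard_integrand_def by (rule slope_rhs_clamped_lipschitz)
  also have "\<dots> = rhs_lipschitz * exp (picard_rate * h) * dist (w1 h) (w2 h)"
    by (simp add: right_diff_distrib[symmetric] abs_mult dist_real_def)
  also have "\<dots> \<le> rhs_lipschitz * exp (picard_rate * h) * dist w1 w2"
    using dist_bounded[of w1 h w2] rhs_lipschitz_pos by (intro mult_left_mono) auto
  finally show ?thesis by (simp add: ac_simps)
qed

lemma picard_op_contraction: "dist (picard_op w1) (picard_op w2) \<le> 1 / 2 * dist w1 w2"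
proof (rule dist_bound)
  fix g :: real
  define x where "x = max g 0"
  define c where "c = rhs_lipschitz * dist w1 w2 / picard_rate"
  have x: "x \<ge> 0" and c: "c = 1 / 2 * dist w1 w2"
    unfolding x_def c_def picard_rate_def using rhs_lipschitz_pos by simp_all
  then have "c \<ge> 0" using zero_le_dist[of w1 w2] by linarith
  have int: "picard_integrand w1 integrable_on {0..x}" "picard_integrand w2 integrable_on {0..x}"
    by (auto intro!: integrable_continuous_real continuous_on_picard_integrand)
  have "\<bar>integral {0..x} (picard_integrand w1) - integral {0..x} (picard_integrand w2)\<bar>
      = norm (integral {0..x} (\<lambda>h. picard_integrand w1 h - picard_integrand w2 h))"
    using integral_diff[OF int] by simp
  also have "\<dots> \<le> integral {0..x} (\<lambda>h. rhs_lipschitz * dist w1 w2 * exp (picard_rate * h))"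
    using picard_integrand_lipschitz
    by (intro integral_norm_bound_integral integrable_diff int)
       (auto intro!: integrable_continuous_real continuous_intros)
  also have "\<dots> = c * exp (picard_rate * x) - c"
    using integral_unique[OF has_integral_exp_mult[OF picard_rate_pos x]] unfolding c_def by simp
  finally have "dist (picard_op w1 g) (picard_op w2 g)
      \<le> exp (- picard_rate * x) * (c * exp (picard_rate * x) - c)"
    unfolding picard_op_apply picard_def dist_real_def x_def[symmetric]
    by (auto simp: abs_mult right_diff_distrib[symmetric] intro!: mult_left_mono)
  also have "\<dots> = c - exp (- picard_rate * x) * c"
    by (simp add: exp_minus field_simps)
  also have "\<dots> \<le> c"
    using \<open>c \<ge> 0\<close> by (simp add: mult_nonneg_nonneg)
  finally show "dist (picard_op w1 g) (picard_op w2 g) \<le> 1 / 2 * dist w1 w2"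
    using c by simp
qed

lemma slope_solution_exists:
  "\<exists>P. continuous_on UNIV P \<and> (\<forall>g\<ge>0. P g = 1 + integral {0..g} (\<lambda>h. slope_rhs_clamped h (P h)))"
proof -
  obtain w where w: "picard_op w = w"
    using banach_fix_type[of "1/2" picard_op] picard_op_contraction by auto
  define P where "P g = exp (picard_rate * g) * w g" for g
  have "continuous_on UNIV P" unfolding P_def[abs_def] by (intro continuous_intros) auto
  moreover have "P g = 1 + integral {0..g} (\<lambda>h. slope_rhs_clamped h (P h))" if "g \<ge> 0" for g
  proof -
    have "w g = exp (- picard_rate * g) * (1 + integral {0..g} (picard_integrand w))"
      using arg_cong[OF w, of "\<lambda>w. apply_bcontfun w g"] that
      unfolding picard_op_apply picard_def by simp
    then show ?thesis
      unfolding P_def picard_integrand_def[abs_def] by (simp add: exp_minus field_simps)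
  qed
  ultimately show ?thesis by blast
qed

end

section \<open>The profile obtained from the slope\<close>

locale slope_solution = slope_ode +
  fixes P :: "real \<Rightarrow> real"
  assumes continuous_P: "continuous_on UNIV P"
    and P_integral_eq: "\<And>g. g \<ge> 0 \<Longrightarrow> P g = 1 + integral {0..g} (\<lambda>h. slope_rhs_clamped h (P h))"
begin

lemma continuous_on_rhs_P: "continuous_on S (\<lambda>h. slope_rhs_clamped h (P h))"
  by (intro continuous_on_slope_rhs_clamped continuous_on_subset[OF continuous_P]) auto

lemma P_ge_1:
  assumes "g \<ge> 0"
  shows "P g \<ge> 1"
proof -
  have "0 \<le> integral {0..g} (\<lambda>h. slope_rhs_clamped h (P h))"
    using slope_rhs_clamped_bounds
    by (intro integral_nonneg integrable_continuous_real continuous_on_rhs_P) auto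
  then show ?thesis using P_integral_eq[OF assms] by simp
qed

lemma P_le_affine:
  assumes "g \<ge> 0"
  shows "P g \<le> 1 + rhs_bound * g"
proof -
  have "\<bar>integral {0..g} (\<lambda>h. slope_rhs_clamped h (P h))\<bar> \<le> rhs_bound * g"
    using slope_rhs_clamped_bounds assms
    by (intro integral_abs_le_const continuous_on_rhs_P) (auto simp: abs_le_iff)
  then show ?thesis using P_integral_eq[OF assms] by simp
qed

lemma P_has_derivative:
  assumes g: "g > 0"
  shows "(P has_real_derivative slope_rhs g (P g)) (at g)"
proof -
  have "((\<lambda>x. integral {0..x} (\<lambda>h. slope_rhs_clamped h (P h)))
      has_real_derivative slope_rhs_clamped g (P g)) (at g within {0..g+1})"
    using g by (intro integral_has_real_derivative continuous_on_rhs_P) auto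
  then have "((\<lambda>x. 1 + integral {0..x} (\<lambda>h. slope_rhs_clamped h (P h)))
      has_real_derivative slope_rhs_clamped g (P g)) (at g)"
    using g at_within_interior[of g "{0..g+1}"] by (auto intro!: derivative_eq_intros)
  then have "(P has_real_derivative slope_rhs_clamped g (P g)) (at g)"
    by (rule has_field_derivative_transform_within_open[where S="{0<..}"])
       (use g P_integral_eq in auto)
  then show ?thesis
    using P_ge_1[of g] g unfolding slope_rhs_clamped_def by simp
qed

definition time_of :: "real \<Rightarrow> real" where
  "time_of g = integral {0..g} (\<lambda>h. 1 / P h)"

lemma continuous_on_inverse_P: "continuous_on {0..B} (\<lambda>h. 1 / P h)"
  using P_ge_1 by (intro continuous_intros continuous_on_subset[OF continuous_P]) force+

lemma continuous_on_time_of: "continuous_on {0..B} time_of"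
  unfolding time_of_def[abs_def]
  by (intro indefinite_integral_continuous_1 integrable_continuous_real continuous_on_inverse_P)

lemma time_of_has_derivative:
  assumes g: "g > 0"
  shows "(time_of has_real_derivative 1 / P g) (at g)"
proof -
  have "(time_of has_real_derivative 1 / P g) (at g within {0..g+1})"
    unfolding time_of_def[abs_def] using g
    by (intro integral_has_real_derivative continuous_on_inverse_P) auto
  then show ?thesis using g at_within_interior[of g "{0..g+1}"] by simp
qed

lemma time_of_0: "time_of 0 = 0"
  unfolding time_of_def by simp

lemma strict_mono_on_time_of: "strict_mono_on {0..} time_of"
proof (rule strict_mono_onI)
  fix g1 g2 :: real assume g: "g1 \<in> {0..}" "g2 \<in> {0..}" "g1 < g2"
  show "time_of g1 < time_of g2"
  proof (rule DERIV_pos_imp_increasing_open[OF g(3)])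
    fix x assume "g1 < x" "x < g2"
    then have x: "x > 0" using g(1) by simp
    then show "\<exists>y. (time_of has_real_derivative y) (at x) \<and> 0 < y"
      using time_of_has_derivative[OF x] P_ge_1[of x] by (intro exI[of _ "1 / P x"]) simp
  next
    show "continuous_on {g1..g2} time_of"
      using g(1) by (intro continuous_on_subset[OF continuous_on_time_of[of g2]]) auto
  qed
qed

lemma time_of_ge_ln:
  assumes g: "g \<ge> 0"
  shows "ln (1 + rhs_bound * g) / rhs_bound \<le> time_of g"
proof -
  let ?M = rhs_bound
  have "((\<lambda>h. 1 / (1 + ?M * h)) has_integral ln (1 + ?M * g) / ?M - ln (1 + ?M * 0) / ?M) {0..g}"
  proof (rule fundamental_theorem_of_calculus[OF g])
    fix h assume "h \<in> {0..g}"
    then have "1 + ?M * h > 0" using rhs_bound_pos by (simp add: add_pos_nonneg)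
    then have "((\<lambda>h. ln (1 + ?M * h) / ?M) has_real_derivative 1 / (1 + ?M * h))
        (at h within {0..g})"
      using rhs_bound_pos by - (rule derivative_eq_intros refl | simp)+
    then show "((\<lambda>h. ln (1 + ?M * h) / ?M) has_vector_derivative 1 / (1 + ?M * h))
        (at h within {0..g})"
      by (simp add: has_real_derivative_iff_has_vector_derivative)
  qed
  moreover have "((\<lambda>h. 1 / P h) has_integral time_of g) {0..g}"
    unfolding time_of_def
    by (intro integrable_integral integrable_continuous_real continuous_on_inverse_P)
  moreover have "1 / (1 + ?M * h) \<le> 1 / P h" if "h \<in> {0..g}" for h
    using that P_le_affine[of h] P_ge_1[of h] by (intro divide_left_mono) auto
  ultimately have "ln (1 + ?M * g) / ?M - ln (1 + ?M * 0) / ?M \<le> time_of g"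
    by (rule has_integral_le)
  then show ?thesis by simp
qed

lemma time_of_unbounded:
  assumes t: "t \<ge> 0"
  shows "\<exists>B\<ge>0. t \<le> time_of B"
proof (intro exI conjI)
  let ?B = "(exp (rhs_bound * t) - 1) / rhs_bound"
  show "?B \<ge> 0" using rhs_bound_pos t by simp
  have "ln (1 + rhs_bound * ?B) / rhs_bound = t" using rhs_bound_pos by simp
  then show "t \<le> time_of ?B" using time_of_ge_ln[OF \<open>?B \<ge> 0\<close>] by simp
qed

definition G :: "real \<Rightarrow> real" where "G = the_inv_into {0..} time_of"

definition Q :: "real \<Rightarrow> real" where "Q t = P (G t)"

lemma inj_on_time_of: "inj_on time_of {0..}"
  by (rule strict_mono_on_imp_inj_on[OF strict_mono_on_time_of])

lemmas time_of_image = strict_mono_on_inverse_continuous(1)[OF continuous_on_time_of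
    strict_mono_on_time_of time_of_0 time_of_unbounded]

lemma continuous_on_G: "continuous_on {0..} G"
  unfolding G_def
  by (rule strict_mono_on_inverse_continuous(2)[OF continuous_on_time_of
    strict_mono_on_time_of time_of_0 time_of_unbounded])

lemma G_nonneg: "t \<ge> 0 \<Longrightarrow> G t \<ge> 0"
  unfolding G_def using the_inv_into_into[OF inj_on_time_of, of t "{0..}"] time_of_image by auto

lemma time_of_G: "t \<ge> 0 \<Longrightarrow> time_of (G t) = t"
  unfolding G_def using f_the_inv_into_f[OF inj_on_time_of] time_of_image by auto

lemma G_0: "G 0 = 0"
  unfolding G_def using the_inv_into_f_f[OF inj_on_time_of, of 0] time_of_0 by simp

lemma G_pos:
  assumes "t > 0"
  shows "G t > 0"
proof -
  have "G t \<noteq> 0" using time_of_G[of t] time_of_0 assms by auto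
  then show ?thesis using G_nonneg[of t] assms by simp
qed

lemma Q_pos: "t > 0 \<Longrightarrow> Q t > 0"
  unfolding Q_def using P_ge_1[of "G t"] G_pos[of t] by linarith

lemma G_has_derivative:
  assumes t: "t > 0"
  shows "(G has_real_derivative Q t) (at t)"
proof -
  have "(G has_real_derivative inverse (1 / P (G t))) (at t)"
  proof (rule DERIV_inverse_function[where f=time_of and a=0 and b="t+1"])
    show "(time_of has_real_derivative 1 / P (G t)) (at (G t))"
      by (rule time_of_has_derivative[OF G_pos[OF t]])
    show "1 / P (G t) \<noteq> 0" using P_ge_1[of "G t"] G_pos[OF t] by simp
    show "\<And>y. 0 < y \<Longrightarrow> y < t + 1 \<Longrightarrow> time_of (G y) = y" using time_of_G by simp
    show "isCont G t" using continuous_on_interior[OF continuous_on_G] t by simp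
  qed (use t in auto)
  then show ?thesis unfolding Q_def by simp
qed

lemma Q_has_derivative:
  assumes t: "t > 0"
  shows "(Q has_real_derivative (a\<^sup>2 * (Q t)\<^sup>2 + G t powr p) / (\<alpha> * G t + b * Q t)) (at t)"
proof -
  have "(Q has_real_derivative slope_rhs (G t) (P (G t)) * Q t) (at t)"
    unfolding Q_def[abs_def]
    using DERIV_chain2[OF P_has_derivative[OF G_pos[OF t]] G_has_derivative[OF t]]
    by (simp add: Q_def)
  moreover have "slope_rhs (G t) (P (G t)) * Q t
      = (a\<^sup>2 * (Q t)\<^sup>2 + G t powr p) / (\<alpha> * G t + b * Q t)"
    using Q_pos[OF t] unfolding slope_rhs_def Q_def by simp
  ultimately show ?thesis by simp
qed

end

section \<open>The self-similar solution\<close>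

locale profile =
  fixes a \<beta> p :: real and G Q :: "real \<Rightarrow> real"
  assumes a_gt1: "a > 1" and \<beta>_neg: "\<beta> < 0" and exponent_rel: "a * p = 2 * a - 2"
    and G_0: "G 0 = 0" and continuous_on_G: "continuous_on {0..} G"
    and G_pos: "\<And>t. t > 0 \<Longrightarrow> G t > 0"
    and Q_pos: "\<And>t. t > 0 \<Longrightarrow> Q t > 0"
    and G_deriv: "\<And>t. t > 0 \<Longrightarrow> (G has_real_derivative Q t) (at t)"
    and Q_ode: "\<And>t. t > 0 \<Longrightarrow> (Q has_real_derivative
        (a\<^sup>2 * (Q t)\<^sup>2 + G t powr p) / (a * (a - 1) * G t - \<beta> * Q t)) (at t)"
begin

definition denom where "denom t = a * (a - 1) * G t - \<beta> * Q t"
definition Q' where "Q' t = (a\<^sup>2 * (Q t)\<^sup>2 + G t powr p) / denom t"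

lemma denom_pos:
  assumes "t > 0"
  shows "denom t > 0"
proof -
  have "a * (a - 1) * G t > 0" using a_gt1 G_pos[OF assms] by simp
  moreover have "- \<beta> * Q t > 0" using \<beta>_neg Q_pos[OF assms] by (simp add: mult_neg_pos)
  ultimately show ?thesis unfolding denom_def by simp
qed

lemma Q_deriv: "t > 0 \<Longrightarrow> (Q has_real_derivative Q' t) (at t)"
  using Q_ode unfolding Q'_def denom_def by auto

lemma Q'_mult_denom: "t > 0 \<Longrightarrow> Q' t * denom t = a\<^sup>2 * (Q t)\<^sup>2 + G t powr p"
  using denom_pos[of t] unfolding Q'_def by auto

lemma Q'_pos:
  assumes "t > 0"
  shows "Q' t > 0"
proof -
  have "0 < a\<^sup>2 * (Q t)\<^sup>2 + G t powr p"
    using Q_pos[OF assms] a_gt1 by (intro add_pos_nonneg) auto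
  then show ?thesis using denom_pos[OF assms] unfolding Q'_def by simp
qed

text \<open>Closed under differentiation on t > 0, because Q' and the derivative of 1 / denom lie in it
  again; this is what makes u infinitely differentiable.\<close>

inductive_set profile_algebra :: "(real \<Rightarrow> real) set" where
  alg_const: "(\<lambda>t. c) \<in> profile_algebra"
| alg_G: "G \<in> profile_algebra"
| alg_Q: "Q \<in> profile_algebra"
| alg_powr: "(\<lambda>t. G t powr r) \<in> profile_algebra"
| alg_inverse_denom: "(\<lambda>t. 1 / denom t) \<in> profile_algebra"
| alg_add: "f \<in> profile_algebra \<Longrightarrow> g \<in> profile_algebra
    \<Longrightarrow> (\<lambda>t. f t + g t) \<in> profile_algebra"
| alg_mult: "f \<in> profile_algebra \<Longrightarrow> g \<in> profile_algebra
    \<Longrightarrow> (\<lambda>t. f t * g t) \<in> profile_algebra"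

lemma alg_diff:
  assumes "f \<in> profile_algebra" "g \<in> profile_algebra"
  shows "(\<lambda>t. f t - g t) \<in> profile_algebra"
proof -
  have "(\<lambda>t. f t + (-1) * g t) \<in> profile_algebra"
    using assms by (intro alg_add alg_mult alg_const)
  then show ?thesis by simp
qed

lemma Q'_in_algebra: "Q' \<in> profile_algebra"
proof -
  have "(\<lambda>t. (a\<^sup>2 * Q t * Q t + G t powr p) * (1 / denom t)) \<in> profile_algebra"
    by (intro alg_mult alg_add alg_const alg_inverse_denom alg_powr alg_Q)
  moreover have "Q' = (\<lambda>t. (a\<^sup>2 * Q t * Q t + G t powr p) * (1 / denom t))"
    unfolding Q'_def[abs_def] by (simp add: power2_eq_square mult.assoc)
  ultimately show ?thesis by simp
qed

lemma inverse_denom_deriv: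
  assumes t: "t > 0"
  shows "((\<lambda>t. 1 / denom t) has_real_derivative
    (-1) * (a * (a - 1) * Q t - \<beta> * Q' t) * (1 / denom t) * (1 / denom t)) (at t)"
proof -
  have "(denom has_real_derivative a * (a - 1) * Q t - \<beta> * Q' t) (at t)"
    unfolding denom_def[abs_def] using G_deriv[OF t] Q_deriv[OF t]
    by (auto intro!: derivative_eq_intros)
  then have "((\<lambda>t. inverse (denom t)) has_real_derivative
      - (inverse (denom t) * (a * (a - 1) * Q t - \<beta> * Q' t) * inverse (denom t))) (at t)"
    by (rule DERIV_inverse') (use denom_pos[OF t] in simp)
  then have "((\<lambda>t. 1 / denom t) has_real_derivative
      - (1 / denom t * (a * (a - 1) * Q t - \<beta> * Q' t) * (1 / denom t))) (at t)"
    by (simp only: inverse_eq_divide)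
  then show ?thesis by (rule DERIV_cong) (simp add: algebra_simps)
qed

lemma profile_algebra_has_derivative:
  assumes "f \<in> profile_algebra"
  shows "\<exists>f'\<in>profile_algebra. \<forall>t>0. (f has_real_derivative f' t) (at t)"
  using assms
proof induction
  case (alg_const c)
  show ?case by (rule bexI[of _ "\<lambda>t. 0"]) (auto intro: profile_algebra.intros)
next
  case alg_G
  show ?case using G_deriv by (intro bexI[of _ Q]) (auto intro: profile_algebra.intros)
next
  case alg_Q
  show ?case using Q_deriv by (intro bexI[of _ Q'] Q'_in_algebra) auto
next
  case (alg_powr r)
  have "(\<lambda>t. r * G t powr (r - 1) * Q t) \<in> profile_algebra"
    by (intro profile_algebra.intros)
  moreover have "((\<lambda>t. G t powr r) has_real_derivative r * G t powr (r - 1) * Q t) (at t)"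
    if "t > 0" for t
    using DERIV_chain2[OF has_real_derivative_powr[OF G_pos[OF that]] G_deriv[OF that]] .
  ultimately show ?case by (intro bexI[of _ "\<lambda>t. r * G t powr (r - 1) * Q t"]) auto
next
  case alg_inverse_denom
  let ?f' = "\<lambda>t. (-1) * (a * (a - 1) * Q t - \<beta> * Q' t) * (1 / denom t) * (1 / denom t)"
  have "?f' \<in> profile_algebra"
    by (intro profile_algebra.intros alg_diff Q'_in_algebra)
  then show ?case using inverse_denom_deriv by (intro bexI[of _ ?f']) auto
next
  case (alg_add f g)
  then obtain f' g' where "f' \<in> profile_algebra" "g' \<in> profile_algebra"
    "\<forall>t>0. (f has_real_derivative f' t) (at t)" "\<forall>t>0. (g has_real_derivative g' t) (at t)"
    by blast
  then show ?case
    by (intro bexI[of _ "\<lambda>t. f' t + g' t"]) (auto intro: profile_algebra.intros derivative_intros)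
next
  case (alg_mult f g)
  then obtain f' g' where "f' \<in> profile_algebra" "g' \<in> profile_algebra"
    "\<forall>t>0. (f has_real_derivative f' t) (at t)" "\<forall>t>0. (g has_real_derivative g' t) (at t)"
    by blast
  then show ?case using alg_mult.hyps
    by (intro bexI[of _ "\<lambda>t. f' t * g t + f t * g' t"])
       (auto intro: profile_algebra.intros DERIV_cong[OF DERIV_mult] simp: algebra_simps)
qed

definition region :: "(real \<times> real) set" where
  "region = {z. 0 < snd z \<and> 0 < fst z + \<beta> * ln (snd z)}"

definition ansatz :: "real \<Rightarrow> (real \<Rightarrow> real) \<Rightarrow> real \<times> real \<Rightarrow> real" where
  "ansatz e h = (\<lambda>z. snd z powr e * h (fst z + \<beta> * ln (snd z)))"

lemma open_region: "open region"
proof -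
  have "open ({z::real \<times> real. 0 < snd z} \<inter> (\<lambda>z. fst z + \<beta> * ln (snd z)) -` {0<..})"
    by (intro continuous_open_preimage open_Collect_less continuous_intros) auto
  moreover have "region = {z. 0 < snd z} \<inter> (\<lambda>z. fst z + \<beta> * ln (snd z)) -` {0<..}"
    unfolding region_def by auto
  ultimately show ?thesis by simp
qed

lemma ansatz_has_derivative:
  assumes z: "z \<in> region" and hd: "\<And>t. t > 0 \<Longrightarrow> (h has_real_derivative h' t) (at t)"
  shows "(ansatz e h has_derivative
     (\<lambda>k. ansatz e h' z * fst k + ansatz (e - 1) (\<lambda>t. e * h t + \<beta> * h' t) z * snd k)) (at z)"
proof -
  define t where "t = fst z + \<beta> * ln (snd z)"
  have y: "snd z > 0" and t: "t > 0" using z unfolding region_def t_def by auto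
  have "((\<lambda>z::real \<times> real. ln (snd z)) has_derivative (\<lambda>k. snd k * (1 / snd z))) (at z)"
    using DERIV_compose_FDERIV[where f=ln and g=snd and x=z and s=UNIV, OF DERIV_ln_divide[OF y]
        has_derivative_snd[OF has_derivative_ident]] by simp
  then have "((\<lambda>z. fst z + \<beta> * ln (snd z)) has_derivative
      (\<lambda>k. fst k + \<beta> * (snd k * (1 / snd z)))) (at z)"
    by (intro has_derivative_add has_derivative_fst[OF has_derivative_ident]
        has_derivative_mult_right)
  from DERIV_compose_FDERIV[OF hd[OF t[unfolded t_def]] this]
  have dh: "((\<lambda>z. h (fst z + \<beta> * ln (snd z))) has_derivative
      (\<lambda>k. (fst k + \<beta> * (snd k * (1 / snd z))) * h' t)) (at z)"
    unfolding t_def by simp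
  have dp: "((\<lambda>z::real \<times> real. snd z powr e) has_derivative
      (\<lambda>k. snd z powr e * (0 * ln (snd z) + snd k * e / snd z))) (at z)"
    using has_derivative_powr[OF has_derivative_snd[OF has_derivative_ident]
        has_derivative_const[of e], of z UNIV] y
    by simp
  have "(ansatz e h has_derivative (\<lambda>k. snd z powr e * ((fst k + \<beta> * (snd k * (1 / snd z))) * h' t)
      + snd z powr e * (0 * ln (snd z) + snd k * e / snd z) * h t)) (at z)"
    unfolding ansatz_def t_def by (rule has_derivative_mult[OF dp dh[unfolded t_def]])
  moreover have "(\<lambda>k. snd z powr e * ((fst k + \<beta> * (snd k * (1 / snd z))) * h' t)
      + snd z powr e * (0 * ln (snd z) + snd k * e / snd z) * h t)
     = (\<lambda>k. ansatz e h' z * fst k + ansatz (e - 1) (\<lambda>t. e * h t + \<beta> * h' t) z * snd k)"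
    using y by (auto simp: fun_eq_iff ansatz_def t_def powr_diff field_simps)
  ultimately show ?thesis by simp
qed

lemma continuous_on_ansatz:
  assumes "\<And>t. t > 0 \<Longrightarrow> (h has_real_derivative h' t) (at t)"
  shows "continuous_on region (ansatz e h)"
  using ansatz_has_derivative[OF _ assms] has_derivative_continuous
  by (blast intro: continuous_at_imp_continuous_on)

lemma Ck_on_ansatz:
  assumes "h \<in> profile_algebra"
  shows "Ck_on k region (ansatz e h)"
  using assms
proof (induction k arbitrary: e h)
  case 0
  then obtain h' where "\<forall>t>0. (h has_real_derivative h' t) (at t)"
    using profile_algebra_has_derivative by blast
  then show ?case using continuous_on_ansatz[of h h'] by simp
next
  case (Suc k)
  then obtain h' where h': "h' \<in> profile_algebra" "\<forall>t>0. (h has_real_derivative h' t) (at t)"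
    using profile_algebra_has_derivative by blast
  have "(\<lambda>t. e * h t + \<beta> * h' t) \<in> profile_algebra"
    using Suc.prems h'(1) by (intro alg_add alg_mult alg_const)
  then show ?case
    unfolding Ck_on.simps
    using ansatz_has_derivative h'(2) Suc.IH[OF h'(1)] Suc.IH
    by (intro exI[of _ "ansatz e h'"] exI[of _ "ansatz (e - 1) (\<lambda>t. e * h t + \<beta> * h' t)"]) blast
qed

lemma pd_ansatz:
  assumes z: "z \<in> region" and eq: "\<And>w. w \<in> region \<Longrightarrow> f w = ansatz e h w"
    and h: "\<And>t. t > 0 \<Longrightarrow> (h has_real_derivative h' t) (at t)"
  shows "pd1 f z = ansatz e h' z" and "pd2 f z = ansatz (e - 1) (\<lambda>t. e * h t + \<beta> * h' t) z"
  using partial_derivatives_eqI[OF ansatz_has_derivative[OF z h] open_region z eq] by auto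

abbreviation u where "u \<equiv> ansatz a G"

text \<open>With t = x + \<beta> ln y, the second derivatives of u are u_xx = y^a Q'(t),
  u_xy = y^(a - 1) H'(t) and u_yy = y^(a - 2) K(t), while u_y = y^(a - 1) H(t).\<close>

definition H where "H t = a * G t + \<beta> * Q t"
definition H' where "H' t = a * Q t + \<beta> * Q' t"
definition K where "K t = (a - 1) * H t + \<beta> * H' t"

lemma H_deriv:
  assumes "t > 0"
  shows "(H has_real_derivative H' t) (at t)"
  unfolding H_def[abs_def] H'_def
  using DERIV_add[OF DERIV_cmult[OF G_deriv[OF assms]] DERIV_cmult[OF Q_deriv[OF assms]]] by simp

lemma profile_hessian_identity:
  assumes "t > 0"
  shows "Q' t * K t - (H' t)\<^sup>2 = G t powr p"
proof -
  have "Q' t * K t - (H' t)\<^sup>2 = Q' t * denom t - a\<^sup>2 * (Q t)\<^sup>2"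
    unfolding K_def H_def H'_def denom_def power2_eq_square by algebra
  then show ?thesis using Q'_mult_denom[OF assms] by simp
qed

lemma pd1_u: "z \<in> region \<Longrightarrow> pd1 u z = ansatz a Q z"
  using pd_ansatz(1)[OF _ _ G_deriv] by blast

lemma pd2_u: "z \<in> region \<Longrightarrow> pd2 u z = ansatz (a - 1) H z"
  using pd_ansatz(2)[OF _ _ G_deriv, of z u a] unfolding H_def[abs_def] by simp

lemma pd11_u: "z \<in> region \<Longrightarrow> pd1 (pd1 u) z = ansatz a Q' z"
  using pd_ansatz(1)[OF _ pd1_u Q_deriv] by blast

lemma pd21_u: "z \<in> region \<Longrightarrow> pd2 (pd1 u) z = ansatz (a - 1) H' z"
  using pd_ansatz(2)[OF _ pd1_u Q_deriv, of z] unfolding H'_def[abs_def] by simp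

lemma pd12_u: "z \<in> region \<Longrightarrow> pd1 (pd2 u) z = ansatz (a - 1) H' z"
  using pd_ansatz(1)[OF _ pd2_u H_deriv] by blast

lemma pd22_u: "z \<in> region \<Longrightarrow> pd2 (pd2 u) z = ansatz (a - 2) K z"
  using pd_ansatz(2)[OF _ pd2_u H_deriv, of z] unfolding K_def[abs_def] by (simp add: algebra_simps)

lemma region_iff: "z \<in> region \<Longrightarrow> snd z > 0 \<and> fst z + \<beta> * ln (snd z) > 0"
  unfolding region_def by auto

lemma ansatz_hessian_det:
  assumes "z \<in> region"
  shows "ansatz a Q' z * ansatz (a - 2) K z - ansatz (a - 1) H' z * ansatz (a - 1) H' z
    = u z powr p"
proof -
  obtain x y where zxy: "z = (x, y)" by (cases z)
  define t where "t = x + \<beta> * ln y"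
  have y: "y > 0" and t: "t > 0" using region_iff[OF assms] unfolding zxy t_def by auto
  have "ansatz a Q' z * ansatz (a - 2) K z - ansatz (a - 1) H' z * ansatz (a - 1) H' z
      = (y powr a * y powr (a - 2)) * Q' t * K t - (y powr (a - 1) * y powr (a - 1)) * (H' t)\<^sup>2"
    unfolding ansatz_def zxy t_def by (simp add: power2_eq_square ac_simps)
  also have "\<dots> = y powr (2 * a - 2) * (Q' t * K t - (H' t)\<^sup>2)"
  proof -
    have p1: "y powr a * y powr (a - 2) = y powr (2 * a - 2)"
      by (subst powr_add[symmetric]) simp
    have p2: "y powr (a - 1) * y powr (a - 1) = y powr (2 * a - 2)"
      by (subst powr_add[symmetric]) simp
    show ?thesis unfolding p1 p2 by (simp add: right_diff_distrib mult.assoc)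
  qed
  also have "\<dots> = y powr (a * p) * G t powr p"
    using profile_hessian_identity[OF t] exponent_rel by simp
  also have "\<dots> = u z powr p"
    unfolding ansatz_def zxy t_def using y G_pos[OF t[unfolded t_def]]
    by (simp add: powr_mult powr_powr)
  finally show ?thesis .
qed

lemma det_hessian_u: "z \<in> region \<Longrightarrow> det_hessian u z = u z powr p"
  unfolding det_hessian_def using pd11_u pd22_u pd21_u pd12_u ansatz_hessian_det by simp

lemma u_pos:
  assumes "z \<in> region"
  shows "u z > 0"
  using region_iff[OF assms] G_pos[of "fst z + \<beta> * ln (snd z)"] unfolding ansatz_def
  by (intro mult_pos_pos) auto

lemma ansatz_Q'_pos:
  assumes "z \<in> region"
  shows "ansatz a Q' z > 0"
  using region_iff[OF assms] Q'_pos[of "fst z + \<beta> * ln (snd z)"] unfolding ansatz_def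
  by (intro mult_pos_pos) auto

lemma ansatz_line_derivative:
  assumes "x + s *\<^sub>R v \<in> region" and "\<And>t. t > 0 \<Longrightarrow> (h has_real_derivative h' t) (at t)"
  shows "((\<lambda>s. ansatz e h (x + s *\<^sub>R v)) has_real_derivative
    ansatz e h' (x + s *\<^sub>R v) * fst v
    + ansatz (e - 1) (\<lambda>t. e * h t + \<beta> * h' t) (x + s *\<^sub>R v) * snd v) (at s)"
  by (rule has_real_derivative_along_line[OF ansatz_has_derivative[OF assms]])

lemma convex_on_u:
  assumes S: "convex S" "S \<subseteq> region"
  shows "convex_on S u"
proof (rule convex_on_if_convex_on_segments[OF S(1)])
  fix x1 x2 assume x: "x1 \<in> S" "x2 \<in> S"
  define v where "v = x2 - x1"
  have on_segment: "x1 + s *\<^sub>R v \<in> region" if "s \<in> {0..1}" for s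
  proof -
    have "(1 - s) *\<^sub>R x1 + s *\<^sub>R x2 \<in> S"
      using that by (intro convexD_alt[OF S(1) x]) auto
    moreover have "x1 + s *\<^sub>R v = (1 - s) *\<^sub>R x1 + s *\<^sub>R x2"
      unfolding v_def by (simp add: algebra_simps)
    ultimately show ?thesis using S(2) by auto
  qed
  let ?uxx = "\<lambda>s. ansatz a Q' (x1 + s *\<^sub>R v)"
  let ?uxy = "\<lambda>s. ansatz (a - 1) H' (x1 + s *\<^sub>R v)"
  let ?uyy = "\<lambda>s. ansatz (a - 2) K (x1 + s *\<^sub>R v)"
  show "convex_on {0..1} (\<lambda>s. u (x1 + s *\<^sub>R (x2 - x1)))"
    unfolding v_def[symmetric]
  proof (rule f''_ge0_imp_convex)
    fix s :: real assume s: "s \<in> {0..1}"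
    show "((\<lambda>s. u (x1 + s *\<^sub>R v)) has_real_derivative
        ansatz a Q (x1 + s *\<^sub>R v) * fst v + ansatz (a - 1) H (x1 + s *\<^sub>R v) * snd v) (at s)"
      using ansatz_line_derivative[OF on_segment[OF s] G_deriv] unfolding H_def[abs_def] .
    have "((\<lambda>s. ansatz (a - 1) H (x1 + s *\<^sub>R v)) has_real_derivative
        ?uxy s * fst v + ?uyy s * snd v) (at s)"
      using ansatz_line_derivative[OF on_segment[OF s] H_deriv, of "a - 1"]
      unfolding K_def[abs_def] by (simp add: algebra_simps)
    then show "((\<lambda>s. ansatz a Q (x1 + s *\<^sub>R v) * fst v + ansatz (a - 1) H (x1 + s *\<^sub>R v) * snd v)
        has_real_derivative
          (?uxx s * fst v + ?uxy s * snd v) * fst v + (?uxy s * fst v + ?uyy s * snd v) * snd v)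
        (at s)"
      using ansatz_line_derivative[OF on_segment[OF s] Q_deriv] unfolding H'_def[abs_def]
      by (intro DERIV_add DERIV_cmult_right)
    show "0 \<le> (?uxx s * fst v + ?uxy s * snd v) * fst v + (?uxy s * fst v + ?uyy s * snd v) * snd v"
      using ansatz_Q'_pos[OF on_segment[OF s]] ansatz_hessian_det[OF on_segment[OF s]]
        u_pos[OF on_segment[OF s]]
      by (intro psd2_quadratic_form_nonneg) auto
  qed simp
qed

definition region_boundary :: "(real \<times> real) set" where
  "region_boundary = {z. 0 < snd z \<and> fst z + \<beta> * ln (snd z) = 0}"

lemma wiping_domain_eq_region: "wiping_domain \<beta> 1 = region"
  unfolding wiping_domain_def region_def by (auto simp: exp_mult_powr_eq_exp_add)

lemma wiping_curve_eq_region_boundary: "wiping_curve \<beta> 1 = region_boundary"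
  unfolding wiping_curve_def region_boundary_def by (auto simp: exp_mult_powr_eq_exp_add)

lemma locally_convex_u: "z \<in> region \<Longrightarrow> \<exists>e>0. ball z e \<subseteq> region \<and> convex_on (ball z e) u"
  using open_region convex_on_u[OF convex_ball] by (meson openE)

lemma C_infinity_on_u: "C_infinity_on region u"
  unfolding C_infinity_on_def using Ck_on_ansatz[OF alg_G] by blast

lemma continuous_on_u_up_to_boundary: "continuous_on (region \<union> region_boundary) u"
proof -
  define S where "S = {z :: real \<times> real. 0 < snd z \<and> 0 \<le> fst z + \<beta> * ln (snd z)}"
  have "continuous_on S (\<lambda>z. fst z + \<beta> * ln (snd z))"
    unfolding S_def by (intro continuous_intros) auto
  then have "continuous_on S (\<lambda>z. G (fst z + \<beta> * ln (snd z)))"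
    by (rule continuous_on_compose2[OF continuous_on_G]) (auto simp: S_def)
  then have "continuous_on S u"
    unfolding ansatz_def by (intro continuous_intros) (auto simp: S_def)
  moreover have "region \<union> region_boundary \<subseteq> S"
    unfolding S_def region_def region_boundary_def by auto
  ultimately show ?thesis by (rule continuous_on_subset)
qed

lemma u_boundary: "z \<in> region_boundary \<Longrightarrow> u z = 0"
  unfolding region_boundary_def ansatz_def using G_0 by simp

end

lemma profile_exists:
  fixes a \<beta> p :: real
  assumes "a > 1" "\<beta> < 0" "0 < p" "p \<le> 1" "a * p = 2 * a - 2"
  shows "\<exists>G Q. profile a \<beta> p G Q"
proof -
  interpret slope_ode a "- \<beta>" p
    using assms by unfold_locales auto
  obtain P where "continuous_on UNIV P"
    "\<forall>g\<ge>0. P g = 1 + integral {0..g} (\<lambda>h. slope_rhs_clamped h (P h))"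
    using slope_solution_exists by blast
  then interpret slope_solution a "- \<beta>" p P
    by unfold_locales auto
  have "profile a \<beta> p G Q"
    using assms G_0 continuous_on_G G_pos Q_pos G_has_derivative Q_has_derivative
    by unfold_locales (auto simp: \<alpha>_def)
  then show ?thesis by blast
qed

theorem proposition7p1:
  fixes p \<beta> :: real
  assumes "0 < p" and "p < 1/2" and "\<beta> < 0"
  shows "\<exists>r0 > 0. \<exists>u :: real \<times> real \<Rightarrow> real.
     (\<forall>z\<in>wiping_domain \<beta> r0. \<exists>e>0. ball z e \<subseteq> wiping_domain \<beta> r0 \<and> convex_on (ball z e) u)
   \<and> C_infinity_on (wiping_domain \<beta> r0) u
   \<and> continuous_on (wiping_domain \<beta> r0 \<union> wiping_curve \<beta> r0) u
   \<and> (\<forall>z\<in>wiping_domain \<beta> r0. u z > 0)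
   \<and> (\<forall>z\<in>wiping_domain \<beta> r0. det_hessian u z = u z powr p)
   \<and> (\<forall>z\<in>wiping_curve \<beta> r0. u z = 0)"
proof -
  define a where "a = 2 / (2 - p)"
  have "a > 1" "a * p = 2 * a - 2"
    using assms unfolding a_def by (auto simp: field_simps)
  then obtain G Q where "profile a \<beta> p G Q"
    using profile_exists[of a \<beta> p] assms by auto
  then interpret profile a \<beta> p G Q .
  show ?thesis
    by (rule exI[of _ 1], intro conjI exI[of _ u])
       (auto simp: wiping_domain_eq_region wiping_curve_eq_region_boundary
         intro: locally_convex_u C_infinity_on_u continuous_on_u_up_to_boundary u_pos det_hessian_u
         u_boundary)
qed

end
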